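(* Let $\Lambda$ be a Gaussian lattice of hyperbolic signature $(1,n)$, $n\ge 2$, with $h$ taking values in $(1+i)\mathcal G$, let $\chi$ be an antiunitary involution, and let $r$ be a root with $\mathbb B^\chi\cap H_r\neq\emptyset$. Then there is a sublattice $N\subset\Lambda^\chi$ isomorphic to one of $A_1$, $A_1(2)$, $A_1\oplus A_1(2)$, $A_1(2)^2$ such that $\mathbb B^\chi\cap H_r=\{[x]\in\mathbb B^\chi: h(x,y)=0\text{ for all }y\in N\}$.
   Context: Let $\mathcal G=\mathbb Z[i]$. A Gaussian lattice is a free $\mathcal G$-module $\Lambda$ of finite rank with a nondegenerate Hermitian form $h$ (antilinear in first, linear in second argument). A root is $r\in\Lambda$ with $h(r,r)=-2$; $\mathbb B=\mathbb P\{z\in\Lambda\otimes_{\mathcal G}\mathbb C:h(z,z)>0\}$, $H_r=\{z\in\mathbb B:h(r,z)=0\}$. An antiunitary involution is an additive bijection $\chi$ with $\chi^2=1$, $\chi(\lambda x)=\bar\lambda\chi(x)$, $h(\chi x,\chi y)=\overline{h(x,y)}$; $\Lambda^\chi=\{x:\chi x=x\}$ with the real form $h$, and $\mathbb B^\chi=\mathbb P\{x\in\Lambda^\chi\otimes\mathbb R:h(x,x)>0\}$. $\mathbb Z$-lattices: $A_1=(-2)$ (rank one, form $-2xy$), $L(n)$ is $L$ with form scaled by $n$, $\oplus$ orthogonal sum. *)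

theory Defs
  imports "HOL-Analysis.Analysis"
begin

definition gauss :: "complex set" where
  "gauss = {z. Re z \<in> \<int> \<and> Im z \<in> \<int>}"

text \<open>The Gaussian lattice of rank CARD('m), realised as the standard
  lattice gauss^m inside complex^m, with Hermitian form given by a Gram
  matrix H (antilinear in the first argument, linear in the second).\<close>
definition glat :: "(complex ^ 'm) set" where
  "glat = {x. \<forall>i. x $ i \<in> gauss}"

definition hform :: "complex ^ 'm ^ 'm \<Rightarrow> complex ^ 'm \<Rightarrow> complex ^ 'm \<Rightarrow> complex" where
  "hform H x y = (\<Sum>i\<in>UNIV. \<Sum>j\<in>UNIV. cnj (x $ i) * H $ i $ j * y $ j)"

definition hermitian_mat :: "complex ^ 'm ^ 'm \<Rightarrow> bool" where
  "hermitian_mat H \<longleftrightarrow> (\<forall>i j. H $ i $ j = cnj (H $ j $ i))"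

definition conj_transpose :: "complex ^ 'm ^ 'm \<Rightarrow> complex ^ 'm ^ 'm" where
  "conj_transpose P = (\<chi> i j. cnj (P $ j $ i))"

definition hyperbolic_sig :: "nat \<Rightarrow> complex ^ 'm ^ 'm \<Rightarrow> bool" where
  "hyperbolic_sig n H \<longleftrightarrow> hermitian_mat H \<and> CARD('m) = n + 1 \<and>
     (\<exists>P i0. invertible P \<and>
        (\<forall>i j. (conj_transpose P ** H ** P) $ i $ j =
                 (if i = j then (if i = i0 then 1 else -1) else 0)))"

definition antiunitary_inv :: "complex ^ 'm ^ 'm \<Rightarrow> (complex ^ 'm \<Rightarrow> complex ^ 'm) \<Rightarrow> bool" where
  "antiunitary_inv H \<chi>' \<longleftrightarrow>
     (\<forall>x\<in>glat. \<chi>' x \<in> glat) \<and>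
     (\<forall>x\<in>glat. \<chi>' (\<chi>' x) = x) \<and>
     (\<forall>x\<in>glat. \<forall>y\<in>glat. \<chi>' (x + y) = \<chi>' x + \<chi>' y) \<and>
     (\<forall>c\<in>gauss. \<forall>x\<in>glat. \<chi>' (c *s x) = cnj c *s \<chi>' x) \<and>
     (\<forall>x\<in>glat. \<forall>y\<in>glat. hform H (\<chi>' x) (\<chi>' y) = cnj (hform H x y))"

definition fixlat :: "(complex ^ 'm \<Rightarrow> complex ^ 'm) \<Rightarrow> (complex ^ 'm) set" where
  "fixlat \<chi>' = {x \<in> glat. \<chi>' x = x}"

text \<open>Points of complex projective space: the class [z] of a nonzero vector.\<close>
definition pclass :: "complex ^ 'm \<Rightarrow> (complex ^ 'm) set" where
  "pclass z = {c *s z | c. c \<noteq> 0}"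

text \<open>The complex ball B (h(z,z) is real as H is Hermitian).\<close>
definition cball_B :: "complex ^ 'm ^ 'm \<Rightarrow> (complex ^ 'm) set set" where
  "cball_B H = {pclass z | z. Re (hform H z z) > 0}"

text \<open>The real ball B^chi: classes of vectors in Lambda^chi \<otimes> R, realised as
  the real span of Lambda^chi inside complex^m.\<close>
definition rball_B :: "complex ^ 'm ^ 'm \<Rightarrow> (complex ^ 'm \<Rightarrow> complex ^ 'm) \<Rightarrow> (complex ^ 'm) set set" where
  "rball_B H \<chi>' = {pclass x | x. x \<in> span (fixlat \<chi>') \<and> Re (hform H x x) > 0}"

definition mirror_H :: "complex ^ 'm ^ 'm \<Rightarrow> complex ^ 'm \<Rightarrow> (complex ^ 'm) set set" where
  "mirror_H H r = {pclass z | z. Re (hform H z z) > 0 \<and> hform H r z = 0}"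

text \<open>N is a Z-lattice (w.r.t. the form hform H) isomorphic to the lattice with
  k x k integer Gram matrix G: there is a Z-linear bijection Z^k \<rightarrow> N
  (Z^k as finitely supported coefficient functions) preserving the forms.\<close>
definition zlat_iso :: "complex ^ 'm ^ 'm \<Rightarrow> (complex ^ 'm) set \<Rightarrow> nat \<Rightarrow> (nat \<Rightarrow> nat \<Rightarrow> int) \<Rightarrow> bool" where
  "zlat_iso H N k G \<longleftrightarrow> (\<exists>v :: nat \<Rightarrow> complex ^ 'm.
     N = {(\<Sum>i<k. of_int (a i) *s v i) | a :: nat \<Rightarrow> int. True} \<and>
     inj_on (\<lambda>a :: nat \<Rightarrow> int. \<Sum>i<k. of_int (a i) *s v i) {a. \<forall>i\<ge>k. a i = 0} \<and>
     (\<forall>i<k. \<forall>j<k. hform H (v i) (v j) = of_int (G i j)))"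

definition gram_A1 :: "nat \<Rightarrow> nat \<Rightarrow> int" where "gram_A1 i j = -2"
definition gram_A1_2 :: "nat \<Rightarrow> nat \<Rightarrow> int" where "gram_A1_2 i j = -4"
definition gram_A1_A1_2 :: "nat \<Rightarrow> nat \<Rightarrow> int" where
  "gram_A1_A1_2 i j = (if i = j then (if i = 0 then -2 else -4) else 0)"
definition gram_A1_2_sq :: "nat \<Rightarrow> nat \<Rightarrow> int" where
  "gram_A1_2_sq i j = (if i = j then -4 else 0)"

end

theory Submission
  imports Defs
begin

(* Put s = chi r and a = h(r, s).  A point x of the real ball on the mirror H_r is orthogonal
   to r and, being real, also to s.  In signature (1,n) the orthogonal complement of x is
   negative definite, so |a| <= 2, with equality only if r and s are proportional.  Since a
   lies in (1+i)G, this leaves a = 0, a = +-1 +- i and a in {+-2, +-2i}.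
   For real x the equation h(x, r) = 0 splits into the two real equations h(x, r + s) = 0 and
   h(x, i r - i s) = 0, where r + s and i r - i s are chi-invariant with Gram matrix
   [[2 Re a - 4, 2 Im a], [2 Im a, -2 Re a - 4]].  For a = 0 this is A1(2)^2.  For
   a = +-1 +- i one of the two vectors has norm -2 and the other norm -6; adding to the latter
   a suitable multiple of the former makes the pair orthogonal, giving A1 + A1(2).  If r = c s
   for a unit c, then one of the invariant vectors r, i r, (1 - i) r, (1 + i) r spans a copy of
   A1 or A1(2) with the same orthogonal complement as r. *)

subsection \<open>Hermitian forms\<close>

lemma hform_add_left: "hform H (x + y) z = hform H x z + hform H y z"
  unfolding hform_def by (simp add: distrib_right sum.distrib)

lemma hform_add_right: "hform H x (y + z) = hform H x y + hform H x z"
  unfolding hform_def by (simp add: distrib_left sum.distrib)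

lemma hform_scale_left: "hform H (c *s x) y = cnj c * hform H x y"
  unfolding hform_def by (simp add: sum_distrib_left algebra_simps)

lemma hform_scale_right: "hform H x (c *s y) = c * hform H x y"
  unfolding hform_def by (simp add: sum_distrib_left algebra_simps)

lemma hform_scaleR_left: "hform H (c *\<^sub>R x) y = of_real c * hform H x y"
  unfolding hform_def vector_scaleR_component
  by (simp add: sum_distrib_left algebra_simps scaleR_conv_of_real)

lemma hform_neg_left: "hform H (- x) y = - hform H x y"
  unfolding hform_def by (simp add: sum_negf)

lemma hform_neg_right: "hform H x (- y) = - hform H x y"
  unfolding hform_def by (simp add: sum_negf)

lemma hform_diff_left: "hform H (x - y) z = hform H x z - hform H y z"
  using hform_add_left[of H x "- y" z] by (simp add: hform_neg_left)

lemma hform_diff_right: "hform H x (y - z) = hform H x y - hform H x z"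
  using hform_add_right[of H x y "- z"] by (simp add: hform_neg_right)

lemma hform_zero_left [simp]: "hform H 0 y = 0"
  unfolding hform_def by simp

lemma hform_zero_right [simp]: "hform H x 0 = 0"
  unfolding hform_def by simp

lemma hform_sum_right: "finite A \<Longrightarrow> hform H x (\<Sum>i\<in>A. f i) = (\<Sum>i\<in>A. hform H x (f i))"
  by (induct A rule: finite_induct) (simp_all add: hform_add_right)

lemmas hform_linear =
  hform_add_left hform_add_right hform_diff_left hform_diff_right hform_scale_left hform_scale_right

lemma cnj_mult_self: "cnj z * z = of_real ((cmod z)\<^sup>2)"
  using complex_norm_square[of z] by (simp add: mult.commute)

lemma Re_hform_scale_self: "Re (hform H (c *s x) (c *s x)) = (cmod c)\<^sup>2 * Re (hform H x x)"
proof -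
  have "hform H (c *s x) (c *s x) = (cnj c * c) * hform H x x"
    by (simp add: hform_linear)
  then show ?thesis
    unfolding cnj_mult_self by (simp del: of_real_power)
qed

lemma hform_cnj_swap:
  assumes "hermitian_mat H"
  shows "hform H y x = cnj (hform H x y)"
proof -
  have "cnj (hform H x y) = (\<Sum>i\<in>UNIV. \<Sum>j\<in>UNIV. x $ i * cnj (H $ i $ j) * cnj (y $ j))"
    unfolding hform_def by simp
  also have "\<dots> = (\<Sum>i\<in>UNIV. \<Sum>j\<in>UNIV. cnj (y $ j) * H $ j $ i * x $ i)"
    using assms unfolding hermitian_mat_def
    by (intro sum.cong refl) (metis complex_cnj_cnj mult.commute mult.left_commute)
  also have "\<dots> = hform H y x"
    unfolding hform_def by (rule sum.swap)
  finally show ?thesis by simp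
qed

lemma hform_eq_0_swap: "hermitian_mat H \<Longrightarrow> hform H x y = 0 \<longleftrightarrow> hform H y x = 0"
  using hform_cnj_swap[of H x y] by auto

lemma hform_matrix_vector: "hform H x y = (\<Sum>i\<in>UNIV. cnj (x $ i) * (H *v y) $ i)"
  unfolding hform_def matrix_vector_mult_def by (simp add: sum_distrib_left mult.assoc)

lemma conj_transpose_adjoint:
  "(\<Sum>i\<in>UNIV. cnj (x $ i) * (conj_transpose P *v y) $ i) = (\<Sum>j\<in>UNIV. cnj ((P *v x) $ j) * y $ j)"
proof -
  have "(\<Sum>i\<in>UNIV. cnj (x $ i) * (conj_transpose P *v y) $ i) =
      (\<Sum>i\<in>UNIV. \<Sum>j\<in>UNIV. cnj (x $ i) * cnj (P $ j $ i) * y $ j)"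
    unfolding conj_transpose_def matrix_vector_mult_def by (simp add: sum_distrib_left mult.assoc)
  also have "\<dots> = (\<Sum>j\<in>UNIV. \<Sum>i\<in>UNIV. cnj (x $ i) * cnj (P $ j $ i) * y $ j)"
    by (rule sum.swap)
  also have "\<dots> = (\<Sum>j\<in>UNIV. cnj ((P *v x) $ j) * y $ j)"
    unfolding matrix_vector_mult_def
    by (simp add: sum_distrib_right sum_distrib_left mult.commute mult.left_commute)
  finally show ?thesis .
qed

lemma hform_congruence:
  "hform (conj_transpose P ** H ** P) x y = hform H (P *v x) (P *v y)"
  unfolding hform_matrix_vector
  by (simp add: matrix_vector_mul_assoc[symmetric] conj_transpose_adjoint)

subsection \<open>Hyperbolic signature\<close>

definition minkowski_form :: "'m \<Rightarrow> complex ^ 'm \<Rightarrow> complex ^ 'm \<Rightarrow> complex" where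
  "minkowski_form i0 x y = cnj (x $ i0) * y $ i0 - (\<Sum>i\<in>UNIV - {i0}. cnj (x $ i) * y $ i)"

lemma minkowski_form_self:
  "minkowski_form i0 x x = of_real ((cmod (x $ i0))\<^sup>2 - (\<Sum>i\<in>UNIV - {i0}. (cmod (x $ i))\<^sup>2))"
  by (simp add: minkowski_form_def cnj_mult_self)

text \<open>Reverse Cauchy--Schwarz: orthogonality and Cauchy--Schwarz on the negative coordinates
  give |x0 w0| \<le> |x'| |w'| < |x0| |w'|, where x', w' omit the coordinate i0.\<close>
lemma minkowski_orthogonal_negative:
  fixes x w :: "complex ^ 'm"
  assumes x: "Re (minkowski_form i0 x x) > 0" and xw: "minkowski_form i0 x w = 0"
  shows "Re (minkowski_form i0 w w) \<le> 0 \<and> (minkowski_form i0 w w = 0 \<longrightarrow> w = 0)"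
proof -
  define I where "I = UNIV - {i0}"
  define Sx where "Sx = (\<Sum>i\<in>I. (cmod (x $ i))\<^sup>2)"
  define Sw where "Sw = (\<Sum>i\<in>I. (cmod (w $ i))\<^sup>2)"
  have Sx: "0 \<le> Sx" "Sx < (cmod (x $ i0))\<^sup>2"
    using x by (auto simp: Sx_def I_def minkowski_form_self sum_nonneg)
  then have x0: "0 < (cmod (x $ i0))\<^sup>2"
    by linarith
  have Sw: "0 \<le> Sw"
    by (simp add: Sw_def sum_nonneg)
  have "cmod (x $ i0) * cmod (w $ i0) = cmod (cnj (x $ i0) * w $ i0)"
    by (simp add: norm_mult)
  also have "\<dots> = cmod (\<Sum>i\<in>I. cnj (x $ i) * w $ i)"
    using xw by (simp add: minkowski_form_def I_def)
  also have "\<dots> \<le> (\<Sum>i\<in>I. cmod (x $ i) * cmod (w $ i))"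
    by (rule order_trans[OF norm_sum]) (simp add: norm_mult)
  finally have "(cmod (x $ i0) * cmod (w $ i0))\<^sup>2 \<le> (\<Sum>i\<in>I. cmod (x $ i) * cmod (w $ i))\<^sup>2"
    by (simp add: power_mono)
  also have "\<dots> \<le> Sx * Sw"
    unfolding Sx_def Sw_def by (rule Cauchy_Schwarz_ineq_sum)
  finally have CS: "(cmod (x $ i0))\<^sup>2 * (cmod (w $ i0))\<^sup>2 \<le> Sx * Sw"
    by (simp add: power_mult_distrib)
  show ?thesis
  proof (cases "Sw = 0")
    case True
    then have "\<forall>i\<in>I. w $ i = 0"
      by (simp add: Sw_def I_def sum_nonneg_eq_0_iff)
    moreover have "w $ i0 = 0"
      using CS True x0 by (simp add: mult_le_0_iff)
    ultimately have "w = 0"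
      by (auto simp: I_def vec_eq_iff)
    then show ?thesis
      by (simp add: minkowski_form_def)
  next
    case False
    have "Sx * Sw < (cmod (x $ i0))\<^sup>2 * Sw"
      using Sx Sw False by (simp add: mult_strict_right_mono)
    then have "(cmod (x $ i0))\<^sup>2 * (cmod (w $ i0))\<^sup>2 < (cmod (x $ i0))\<^sup>2 * Sw"
      using CS by linarith
    then have "(cmod (w $ i0))\<^sup>2 < Sw"
      using x0 by (simp add: mult_less_cancel_left_pos)
    moreover have "minkowski_form i0 w w = of_real ((cmod (w $ i0))\<^sup>2 - Sw)"
      unfolding minkowski_form_self Sw_def I_def ..
    ultimately show ?thesis
      by (simp del: of_real_diff)
  qed
qed

lemma hform_diagonal:
  assumes "\<forall>i j. D $ i $ j = (if i = j then (if i = i0 then 1 else -1) else 0)"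
  shows "hform D x y = minkowski_form i0 x y"
proof -
  have "(\<Sum>j\<in>UNIV. cnj (x $ i) * D $ i $ j * y $ j) =
      (if i = i0 then 1 else -1) * (cnj (x $ i) * y $ i)" for i
  proof -
    have "(\<Sum>j\<in>UNIV. cnj (x $ i) * D $ i $ j * y $ j) =
        (\<Sum>j\<in>UNIV. if j = i then (if i = i0 then 1 else -1) * (cnj (x $ i) * y $ i) else 0)"
      using assms by (intro sum.cong) auto
    then show ?thesis
      by simp
  qed
  then have "hform D x y = (\<Sum>i\<in>UNIV. (if i = i0 then 1 else -1) * (cnj (x $ i) * y $ i))"
    unfolding hform_def by simp
  also have "\<dots> = minkowski_form i0 x y"
    unfolding minkowski_form_def by (simp add: sum.remove[of UNIV i0] sum_negf)
  finally show ?thesis .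
qed

lemma hyperbolic_orthogonal_negative:
  assumes "hyperbolic_sig n H" and "Re (hform H x x) > 0" and "hform H x w = 0"
  shows "Re (hform H w w) \<le> 0 \<and> (hform H w w = 0 \<longrightarrow> w = 0)"
proof -
  obtain P i0 where "invertible P" and diag: "\<forall>i j. (conj_transpose P ** H ** P) $ i $ j =
      (if i = j then (if i = i0 then 1 else -1) else 0)"
    using assms(1) unfolding hyperbolic_sig_def by blast
  then obtain Q where "P ** Q = mat 1"
    unfolding invertible_def by blast
  then have PQ: "P *v (Q *v v) = v" for v
    by (simp add: matrix_vector_mul_assoc)
  have transfer: "hform H u v = minkowski_form i0 (Q *v u) (Q *v v)" for u v
    using hform_congruence[of P H "Q *v u" "Q *v v"] by (simp add: PQ hform_diagonal[OF diag])
  have "Re (minkowski_form i0 (Q *v w) (Q *v w)) \<le> 0 \<and>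
      (minkowski_form i0 (Q *v w) (Q *v w) = 0 \<longrightarrow> Q *v w = 0)"
    using assms(2,3) by (intro minkowski_orthogonal_negative) (simp_all add: transfer)
  then show ?thesis
    using PQ[of w] by (auto simp: transfer)
qed

text \<open>The vector w = r - c s with c = - cnj a / 2, where a = h(r, s), satisfies
  h(w, w) = |a|^2 / 2 - 2 and is orthogonal to the positive vector x.\<close>
lemma root_pairing_bound:
  assumes sig: "hyperbolic_sig n H" and x: "Re (hform H x x) > 0"
    and "hform H x r = 0" "hform H x s = 0" and "hform H r r = -2" "hform H s s = -2"
  shows "(cmod (hform H r s))\<^sup>2 \<le> 4"
    and "(cmod (hform H r s))\<^sup>2 = 4 \<Longrightarrow> r = (- cnj (hform H r s) / 2) *s s"
proof -
  define a where "a = hform H r s"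
  define w where "w = r - (- cnj a / 2) *s s"
  have "hermitian_mat H"
    using sig unfolding hyperbolic_sig_def by blast
  then have "hform H s r = cnj a"
    unfolding a_def by (rule hform_cnj_swap)
  then have "hform H w w = cnj a * a / 2 - 2"
    using assms(5,6) unfolding w_def by (simp add: hform_linear a_def[symmetric] algebra_simps)
  then have "hform H w w = of_real ((cmod a)\<^sup>2 / 2 - 2)"
    by (simp add: cnj_mult_self del: of_real_power)
  moreover have "Re (hform H w w) \<le> 0 \<and> (hform H w w = 0 \<longrightarrow> w = 0)"
    using assms(3,4)
    by (intro hyperbolic_orthogonal_negative[OF sig x]) (simp add: w_def hform_linear)
  ultimately show "(cmod a)\<^sup>2 \<le> 4" and "(cmod a)\<^sup>2 = 4 \<Longrightarrow> r = (- cnj a / 2) *s s"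
    by (auto simp: w_def eq_neg_iff_add_eq_0)
qed

subsection \<open>Gaussian lattices and antiunitary involutions\<close>

lemma gauss_of_int [simp]: "of_int k \<in> gauss"
  unfolding gauss_def by simp

lemma gauss_ii [simp]: "\<i> \<in> gauss"
  unfolding gauss_def by simp

lemma gauss_add: "a \<in> gauss \<Longrightarrow> b \<in> gauss \<Longrightarrow> a + b \<in> gauss"
  unfolding gauss_def by auto

lemma gauss_mult: "a \<in> gauss \<Longrightarrow> b \<in> gauss \<Longrightarrow> a * b \<in> gauss"
  unfolding gauss_def by auto

lemma gaussE:
  assumes "g \<in> gauss"
  obtains p q :: int where "g = of_int p + \<i> * of_int q"
  using assms unfolding gauss_def by (auto simp: complex_eq_iff elim!: Ints_cases)

lemma int_square_le_2:
  fixes p :: int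
  assumes "p\<^sup>2 \<le> 2"
  shows "p \<in> {-1, 0, 1}"
proof -
  have "\<not> 2 \<le> \<bar>p\<bar>"
  proof
    assume "2 \<le> \<bar>p\<bar>"
    then have "2\<^sup>2 \<le> p\<^sup>2"
      using abs_le_square_iff[of 2 p] by simp
    then show False
      using assms by simp
  qed
  then show ?thesis
    by auto
qed

lemma small_gauss_multiple_cases:
  assumes "g \<in> gauss" "a = (1 + \<i>) * g" and "(cmod a)\<^sup>2 \<le> 4"
  obtains "a = 0"
    | \<epsilon> t :: int where "\<epsilon> \<in> {-1, 1}" "t \<in> {-1, 1}" "a = of_int \<epsilon> + \<i> * of_int t"
    | "a \<in> {2, -2, 2 * \<i>, -2 * \<i>}"
proof -
  obtain p q :: int where g: "g = of_int p + \<i> * of_int q"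
    using assms(1) by (rule gaussE)
  have a: "a = of_int (p - q) + \<i> * of_int (p + q)"
    unfolding assms(2) g by (simp add: algebra_simps)
  have "(cmod a)\<^sup>2 = 2 * (p\<^sup>2 + q\<^sup>2)"
    unfolding a cmod_power2 by (simp add: algebra_simps power2_eq_square)
  then have "real_of_int (p\<^sup>2 + q\<^sup>2) \<le> real_of_int 2"
    using assms(3) by simp
  then have "p\<^sup>2 + q\<^sup>2 \<le> 2"
    by (simp only: of_int_le_iff)
  then have "p\<^sup>2 \<le> 2" "q\<^sup>2 \<le> 2"
    using zero_le_power2[of p] zero_le_power2[of q] by linarith+
  then have "p \<in> {-1, 0, 1}" "q \<in> {-1, 0, 1}"
    by (metis int_square_le_2)+
  then consider "p = 0 \<and> q = 0" | "p - q \<in> {-1, 1} \<and> p + q \<in> {-1, 1}"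
    | "p \<in> {-1, 1} \<and> q \<in> {-1, 1}"
    by auto
  then show thesis
  proof cases
    case 1
    then show thesis
      using that(1) a by simp
  next
    case 2
    then show thesis
      using that(2) a by blast
  next
    case 3
    then show thesis
      using that(3) a by (auto simp: complex_eq_iff)
  qed
qed

lemma glat_zero [simp]: "0 \<in> glat"
  unfolding glat_def gauss_def by simp

lemma glat_add: "x \<in> glat \<Longrightarrow> y \<in> glat \<Longrightarrow> x + y \<in> glat"
  unfolding glat_def by (simp add: gauss_add)

lemma glat_scale: "c \<in> gauss \<Longrightarrow> x \<in> glat \<Longrightarrow> c *s x \<in> glat"
  unfolding glat_def by (simp add: gauss_mult)

lemma glat_diff: "x \<in> glat \<Longrightarrow> y \<in> glat \<Longrightarrow> x - y \<in> glat"
  using glat_add[of x "(-1) *s y"] glat_scale[of "-1" y] gauss_of_int[of "-1"] by simp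

context
  fixes H :: "complex ^ 'm ^ 'm" and \<sigma> :: "complex ^ 'm \<Rightarrow> complex ^ 'm"
  assumes antiunitary: "antiunitary_inv H \<sigma>"
begin

lemma antiunitary_glat: "x \<in> glat \<Longrightarrow> \<sigma> x \<in> glat"
  using antiunitary unfolding antiunitary_inv_def by blast

lemma antiunitary_involutive: "x \<in> glat \<Longrightarrow> \<sigma> (\<sigma> x) = x"
  using antiunitary unfolding antiunitary_inv_def by blast

lemma antiunitary_add: "x \<in> glat \<Longrightarrow> y \<in> glat \<Longrightarrow> \<sigma> (x + y) = \<sigma> x + \<sigma> y"
  using antiunitary unfolding antiunitary_inv_def by blast

lemma antiunitary_scale: "c \<in> gauss \<Longrightarrow> x \<in> glat \<Longrightarrow> \<sigma> (c *s x) = cnj c *s \<sigma> x"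
  using antiunitary unfolding antiunitary_inv_def by blast

lemma antiunitary_hform: "x \<in> glat \<Longrightarrow> y \<in> glat \<Longrightarrow> hform H (\<sigma> x) (\<sigma> y) = cnj (hform H x y)"
  using antiunitary unfolding antiunitary_inv_def by blast

lemma antiunitary_diff: "x \<in> glat \<Longrightarrow> y \<in> glat \<Longrightarrow> \<sigma> (x - y) = \<sigma> x - \<sigma> y"
  using antiunitary_add[of x "(-1) *s y"] antiunitary_scale[of "-1" y] glat_scale[of "-1" y]
    gauss_of_int[of "-1"] by simp

lemma fixlat_zero: "0 \<in> fixlat \<sigma>"
  using antiunitary_add[of 0 0] unfolding fixlat_def by simp

lemma fixlat_add: "x \<in> fixlat \<sigma> \<Longrightarrow> y \<in> fixlat \<sigma> \<Longrightarrow> x + y \<in> fixlat \<sigma>"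
  unfolding fixlat_def by (simp add: glat_add antiunitary_add)

lemma fixlat_int_scale: "x \<in> fixlat \<sigma> \<Longrightarrow> of_int k *s x \<in> fixlat \<sigma>"
  unfolding fixlat_def by (simp add: glat_scale antiunitary_scale)

lemma fixlat_sum: "(\<And>i. i \<in> A \<Longrightarrow> f i \<in> fixlat \<sigma>) \<Longrightarrow> (\<Sum>i\<in>A. f i) \<in> fixlat \<sigma>"
  by (induct A rule: infinite_finite_induct) (simp_all add: fixlat_zero fixlat_add)

lemma trace_in_fixlat: "v \<in> glat \<Longrightarrow> v + \<sigma> v \<in> fixlat \<sigma>"
  unfolding fixlat_def
  by (simp add: glat_add antiunitary_glat antiunitary_add antiunitary_involutive add.commute)

lemma imaginary_trace_in_fixlat: "v \<in> glat \<Longrightarrow> \<i> *s v - \<i> *s \<sigma> v \<in> fixlat \<sigma>"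
  unfolding fixlat_def
  by (simp add: glat_scale glat_diff antiunitary_glat antiunitary_scale antiunitary_diff
      antiunitary_involutive)

lemma hform_span_fixlat_antiunitary:
  assumes x: "x \<in> span (fixlat \<sigma>)" and v: "v \<in> glat"
  shows "hform H x (\<sigma> v) = cnj (hform H x v)"
proof -
  have "subspace {x. hform H x (\<sigma> v) = cnj (hform H x v)}"
    unfolding subspace_def by (simp add: hform_add_left hform_scaleR_left)
  moreover have "hform H f (\<sigma> v) = cnj (hform H f v)" if "f \<in> fixlat \<sigma>" for f
    using that antiunitary_hform[of f v] v unfolding fixlat_def by auto
  ultimately show ?thesis
    using span_induct[OF x] by blast
qed

lemma orthogonal_trace_pair_iff:
  assumes "x \<in> span (fixlat \<sigma>)" and "v \<in> glat"
  shows "hform H x (v + \<sigma> v) = 0 \<and> hform H x (\<i> *s v - \<i> *s \<sigma> v) = 0 \<longleftrightarrow> hform H x v = 0"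
  using hform_span_fixlat_antiunitary[OF assms]
  by (auto simp: hform_linear complex_eq_iff)

lemma trace_pair_gram:
  assumes "hermitian_mat H" and v: "v \<in> glat" "hform H v v = -2"
  defines "a \<equiv> hform H v (\<sigma> v)"
  shows "hform H (v + \<sigma> v) (v + \<sigma> v) = of_real (2 * Re a - 4)"
    and "hform H (\<i> *s v - \<i> *s \<sigma> v) (\<i> *s v - \<i> *s \<sigma> v) = of_real (- 2 * Re a - 4)"
    and "hform H (v + \<sigma> v) (\<i> *s v - \<i> *s \<sigma> v) = of_real (2 * Im a)"
proof -
  have "hform H (\<sigma> v) v = cnj a"
    unfolding a_def by (rule hform_cnj_swap[OF assms(1)])
  moreover have "hform H (\<sigma> v) (\<sigma> v) = -2"
    using antiunitary_hform[OF v(1) v(1)] v(2) by simp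
  ultimately show "hform H (v + \<sigma> v) (v + \<sigma> v) = of_real (2 * Re a - 4)"
    and "hform H (\<i> *s v - \<i> *s \<sigma> v) (\<i> *s v - \<i> *s \<sigma> v) = of_real (- 2 * Re a - 4)"
    and "hform H (v + \<sigma> v) (\<i> *s v - \<i> *s \<sigma> v) = of_real (2 * Im a)"
    using v(2) by (simp_all add: hform_linear a_def[symmetric] complex_eq_iff)
qed

end

subsection \<open>Lattices spanned by orthogonal vectors\<close>

definition int_span :: "nat \<Rightarrow> (nat \<Rightarrow> complex ^ 'm) \<Rightarrow> (complex ^ 'm) set" where
  "int_span k v = {(\<Sum>i<k. of_int (c i) *s v i) | c :: nat \<Rightarrow> int. True}"

lemma generator_in_int_span:
  assumes "i < k"
  shows "v i \<in> int_span k v"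
proof -
  have "(\<Sum>j<k. of_int (if j = i then 1 else 0) *s v j) = (\<Sum>j<k. if j = i then v j else 0)"
    by (intro sum.cong) auto
  also have "\<dots> = v i"
    using assms by simp
  finally have "(\<Sum>j<k. of_int (if j = i then 1 else 0) *s v j) = v i" .
  then show ?thesis
    unfolding int_span_def by (auto intro!: exI[of _ "\<lambda>j. if j = i then 1 else 0"])
qed

lemma orthogonal_int_span_iff:
  "(\<forall>y\<in>int_span k v. hform H x y = 0) \<longleftrightarrow> (\<forall>i<k. hform H x (v i) = 0)"
  using generator_in_int_span[of _ k v]
  by (auto simp: int_span_def hform_sum_right hform_scale_right)

lemma int_span_subset_fixlat:
  "antiunitary_inv H \<sigma> \<Longrightarrow> \<forall>i<k. v i \<in> fixlat \<sigma> \<Longrightarrow> int_span k v \<subseteq> fixlat \<sigma>"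
  unfolding int_span_def by (auto intro!: fixlat_sum fixlat_int_scale)

text \<open>Pairing a combination with the j-th generator recovers its j-th coefficient.\<close>
lemma zlat_iso_int_span:
  fixes v :: "nat \<Rightarrow> complex ^ 'm"
  assumes gram: "\<forall>i<k. \<forall>j<k. hform H (v i) (v j) = of_int (G i j)"
    and diag: "\<forall>i<k. G i i \<noteq> 0" "\<forall>i<k. \<forall>j<k. i \<noteq> j \<longrightarrow> G i j = 0"
  shows "zlat_iso H (int_span k v) k G"
proof -
  have coeff: "hform H (v j) (\<Sum>i<k. of_int (c i) *s v i) = of_int (c j) * of_int (G j j)"
    if "j < k" for c :: "nat \<Rightarrow> int" and j
  proof -
    have "hform H (v j) (\<Sum>i<k. of_int (c i) *s v i) = (\<Sum>i<k. of_int (c i) * of_int (G j i))"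
      using gram that by (simp add: hform_sum_right hform_scale_right)
    also have "\<dots> = (\<Sum>i<k. if i = j then of_int (c j) * of_int (G j j) else 0)"
      using diag(2) that by (intro sum.cong) auto
    finally show ?thesis
      using that by simp
  qed
  have "inj_on (\<lambda>c. \<Sum>i<k. of_int (c i) *s v i) {c. \<forall>i\<ge>k. c i = 0}"
  proof (rule inj_onI, rule ext)
    fix c d j
    assume c: "c \<in> {c. \<forall>i\<ge>k. c i = 0}" and d: "d \<in> {c. \<forall>i\<ge>k. c i = 0}"
      and eq: "(\<Sum>i<k. of_int (c i) *s v i) = (\<Sum>i<k. of_int (d i) *s v i)"
    show "c j = d j"
    proof (cases "j < k")
      case True
      then have "(of_int (c j) :: complex) * of_int (G j j) = of_int (d j) * of_int (G j j)"
        using coeff[of j c] coeff[of j d] eq by metis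
      then show ?thesis
        using diag(1) True by simp
    next
      case False
      then show ?thesis
        using c d by simp
    qed
  qed
  then show ?thesis
    unfolding zlat_iso_def int_span_def using gram by blast
qed

subsection \<open>Mirrors in the real ball\<close>

lemma pclass_self: "x \<in> pclass x"
  unfolding pclass_def by (auto intro!: exI[of _ 1])

lemma pclass_eqD: "pclass x = pclass y \<Longrightarrow> \<exists>c. c \<noteq> 0 \<and> x = c *s y"
  using pclass_self[of x] unfolding pclass_def by blast

lemma positive_pclass_iff:
  "pclass x = pclass y \<Longrightarrow> Re (hform H x x) > 0 \<longleftrightarrow> Re (hform H y y) > 0"
  by (auto dest!: pclass_eqD simp: Re_hform_scale_self zero_less_mult_iff)

lemma orthogonal_pclass_iff:
  "pclass x = pclass y \<Longrightarrow> hform H r x = 0 \<longleftrightarrow> hform H r y = 0"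
  by (auto dest!: pclass_eqD simp: hform_scale_right)

lemma pclass_in_mirror_iff:
  "pclass x \<in> mirror_H H r \<longleftrightarrow> Re (hform H x x) > 0 \<and> hform H r x = 0"
proof
  assume "pclass x \<in> mirror_H H r"
  then obtain z where "pclass x = pclass z" "Re (hform H z z) > 0" "hform H r z = 0"
    unfolding mirror_H_def by blast
  then show "Re (hform H x x) > 0 \<and> hform H r x = 0"
    using positive_pclass_iff orthogonal_pclass_iff by metis
qed (auto simp: mirror_H_def)

lemma pclass_in_rball_iff:
  assumes "x \<in> span (fixlat \<sigma>)"
  shows "pclass x \<in> rball_B H \<sigma> \<longleftrightarrow> Re (hform H x x) > 0"
proof
  assume "pclass x \<in> rball_B H \<sigma>"
  then obtain z where "pclass x = pclass z" "Re (hform H z z) > 0"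
    unfolding rball_B_def by blast
  then show "Re (hform H x x) > 0"
    using positive_pclass_iff by metis
qed (use assms in \<open>auto simp: rball_B_def\<close>)

definition cuts_out_mirror ::
    "complex ^ 'm ^ 'm \<Rightarrow> (complex ^ 'm \<Rightarrow> complex ^ 'm) \<Rightarrow> complex ^ 'm \<Rightarrow> (complex ^ 'm) set \<Rightarrow> bool"
  where "cuts_out_mirror H \<sigma> r N \<longleftrightarrow>
    rball_B H \<sigma> \<inter> mirror_H H r =
      {p \<in> rball_B H \<sigma>. \<exists>x\<in>span (fixlat \<sigma>). p = pclass x \<and> (\<forall>y\<in>N. hform H x y = 0)}"

lemma cuts_out_mirrorI:
  assumes "hermitian_mat H"
    and "\<And>x. x \<in> span (fixlat \<sigma>) \<Longrightarrow> (\<forall>y\<in>N. hform H x y = 0) \<longleftrightarrow> hform H x r = 0"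
  shows "cuts_out_mirror H \<sigma> r N"
  unfolding cuts_out_mirror_def
proof (intro set_eqI iffI)
  fix p
  assume p: "p \<in> rball_B H \<sigma> \<inter> mirror_H H r"
  then obtain x where x: "p = pclass x" "x \<in> span (fixlat \<sigma>)"
    unfolding rball_B_def by blast
  then have "hform H x r = 0"
    using p hform_eq_0_swap[OF assms(1)] by (auto simp: pclass_in_mirror_iff)
  with p x assms(2)
  show "p \<in> {p \<in> rball_B H \<sigma>. \<exists>x\<in>span (fixlat \<sigma>). p = pclass x \<and> (\<forall>y\<in>N. hform H x y = 0)}"
    by blast
next
  fix p
  assume "p \<in> {p \<in> rball_B H \<sigma>. \<exists>x\<in>span (fixlat \<sigma>). p = pclass x \<and> (\<forall>y\<in>N. hform H x y = 0)}"
  then obtain x where "p \<in> rball_B H \<sigma>" "p = pclass x" "x \<in> span (fixlat \<sigma>)" "hform H x r = 0"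
    using assms(2) by blast
  then show "p \<in> rball_B H \<sigma> \<inter> mirror_H H r"
    using hform_eq_0_swap[OF assms(1)] by (auto simp: pclass_in_rball_iff pclass_in_mirror_iff)
qed

lemma real_ball_mirror_witness:
  assumes "hermitian_mat H" and "rball_B H \<sigma> \<inter> mirror_H H r \<noteq> {}"
  obtains x where "x \<in> span (fixlat \<sigma>)" "Re (hform H x x) > 0" "hform H x r = 0"
proof -
  obtain x where "x \<in> span (fixlat \<sigma>)" "pclass x \<in> rball_B H \<sigma> \<inter> mirror_H H r"
    using assms(2) unfolding rball_B_def by blast
  then show thesis
    using that hform_eq_0_swap[OF assms(1)] by (auto simp: pclass_in_mirror_iff)
qed

lemma int_span_cuts_out_mirror:
  assumes "hermitian_mat H" and "antiunitary_inv H \<sigma>"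
    and "\<forall>i<k. v i \<in> fixlat \<sigma>"
    and "\<forall>i<k. \<forall>j<k. hform H (v i) (v j) = of_int (G i j)"
    and "\<forall>i<k. G i i \<noteq> 0" and "\<forall>i<k. \<forall>j<k. i \<noteq> j \<longrightarrow> G i j = 0"
    and "\<And>x. x \<in> span (fixlat \<sigma>) \<Longrightarrow> (\<forall>i<k. hform H x (v i) = 0) \<longleftrightarrow> hform H x r = 0"
  shows "\<exists>N\<subseteq>fixlat \<sigma>. zlat_iso H N k G \<and> cuts_out_mirror H \<sigma> r N"
proof (intro exI conjI)
  show "int_span k v \<subseteq> fixlat \<sigma>"
    using assms(2,3) by (rule int_span_subset_fixlat)
  show "zlat_iso H (int_span k v) k G"
    using assms(4-6) by (rule zlat_iso_int_span)
  show "cuts_out_mirror H \<sigma> r (int_span k v)"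
    using assms(1) by (rule cuts_out_mirrorI) (simp add: orthogonal_int_span_iff assms(7))
qed

lemma root_multiple_cuts_out_mirror:
  assumes "hermitian_mat H" and "antiunitary_inv H \<sigma>"
    and "\<mu> *s r \<in> fixlat \<sigma>" and "\<mu> \<noteq> 0"
    and "hform H (\<mu> *s r) (\<mu> *s r) = of_int (G 0 0)" and "G 0 0 \<noteq> 0"
  shows "\<exists>N\<subseteq>fixlat \<sigma>. zlat_iso H N 1 G \<and> cuts_out_mirror H \<sigma> r N"
  using assms
  by (intro int_span_cuts_out_mirror[where v = "\<lambda>_. \<mu> *s r"]) (simp_all add: hform_scale_right)

lemma orthogonal_pair_cuts_out_mirror:
  assumes "hermitian_mat H" and "antiunitary_inv H \<sigma>"
    and "u \<in> fixlat \<sigma>" "w \<in> fixlat \<sigma>" and "hform H u w = 0"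
    and "hform H u u = of_int (G 0 0)" "hform H w w = of_int (G 1 1)"
    and "G 0 0 \<noteq> 0" "G 1 1 \<noteq> 0" "G 0 1 = 0" "G 1 0 = 0"
    and "\<And>x. x \<in> span (fixlat \<sigma>) \<Longrightarrow> hform H x u = 0 \<and> hform H x w = 0 \<longleftrightarrow> hform H x r = 0"
  shows "\<exists>N\<subseteq>fixlat \<sigma>. zlat_iso H N 2 G \<and> cuts_out_mirror H \<sigma> r N"
proof (rule int_span_cuts_out_mirror[where v = "\<lambda>i. if i = 0 then u else w"])
  have "hform H w u = 0"
    using hform_eq_0_swap[OF assms(1)] assms(5) by blast
  then show "\<forall>i<2. \<forall>j<2. hform H (if i = 0 then u else w) (if j = 0 then u else w) = of_int (G i j)"
    using assms(5-11) by (auto simp: less_2_cases_iff)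
qed (use assms in \<open>auto simp: less_2_cases_iff\<close>)

lemma shear_cuts_out_mirror:
  assumes herm: "hermitian_mat H" and "antiunitary_inv H \<sigma>"
    and "u \<in> fixlat \<sigma>" "w \<in> fixlat \<sigma>" and t: "t \<in> {-1, 1}"
    and uw: "hform H u u = -2" "hform H w w = -6" "hform H u w = 2 * of_int t"
    and orth: "\<And>x. x \<in> span (fixlat \<sigma>) \<Longrightarrow> hform H x u = 0 \<and> hform H x w = 0 \<longleftrightarrow> hform H x r = 0"
  shows "\<exists>N\<subseteq>fixlat \<sigma>. zlat_iso H N 2 gram_A1_A1_2 \<and> cuts_out_mirror H \<sigma> r N"
proof (rule orthogonal_pair_cuts_out_mirror[of H \<sigma> u "w + of_int t *s u"])
  have "hform H w u = cnj (hform H u w)"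
    by (rule hform_cnj_swap[OF herm])
  then have "hform H w u = 2 * of_int t"
    using uw(3) by simp
  then show "hform H u (w + of_int t *s u) = 0"
    and "hform H (w + of_int t *s u) (w + of_int t *s u) = of_int (gram_A1_A1_2 1 1)"
    using t uw by (auto simp: hform_linear gram_A1_A1_2_def)
  show "w + of_int t *s u \<in> fixlat \<sigma>"
    using assms by (simp add: fixlat_add fixlat_int_scale)
  show "hform H x u = 0 \<and> hform H x (w + of_int t *s u) = 0 \<longleftrightarrow> hform H x r = 0"
    if "x \<in> span (fixlat \<sigma>)" for x
    using orth[OF that] by (auto simp: hform_linear)
qed (use assms in \<open>simp_all add: gram_A1_A1_2_def\<close>)

lemma trace_pair_cuts_out_mirror_A1_2_sq:
  assumes herm: "hermitian_mat H" and au: "antiunitary_inv H \<sigma>"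
    and r: "r \<in> glat" "hform H r r = -2" and "hform H r (\<sigma> r) = 0"
  shows "\<exists>N\<subseteq>fixlat \<sigma>. zlat_iso H N 2 gram_A1_2_sq \<and> cuts_out_mirror H \<sigma> r N"
  using assms trace_pair_gram[OF au herm r]
  by (intro orthogonal_pair_cuts_out_mirror[of H \<sigma> "r + \<sigma> r" "\<i> *s r - \<i> *s \<sigma> r"])
    (simp_all add: trace_in_fixlat imaginary_trace_in_fixlat orthogonal_trace_pair_iff
      gram_A1_2_sq_def)

lemma trace_pair_cuts_out_mirror_A1_A1_2:
  assumes herm: "hermitian_mat H" and au: "antiunitary_inv H \<sigma>"
    and r: "r \<in> glat" "hform H r r = -2"
    and \<epsilon>: "\<epsilon> \<in> {-1, 1}" and t: "t \<in> {-1, 1}"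
    and a: "hform H r (\<sigma> r) = of_int \<epsilon> + \<i> * of_int t"
  shows "\<exists>N\<subseteq>fixlat \<sigma>. zlat_iso H N 2 gram_A1_A1_2 \<and> cuts_out_mirror H \<sigma> r N"
proof -
  define e1 where "e1 = r + \<sigma> r"
  define e2 where "e2 = \<i> *s r - \<i> *s \<sigma> r"
  have fixed: "e1 \<in> fixlat \<sigma>" "e2 \<in> fixlat \<sigma>"
    unfolding e1_def e2_def using r(1)
    by (simp_all add: trace_in_fixlat[OF au] imaginary_trace_in_fixlat[OF au])
  have orth: "hform H x e1 = 0 \<and> hform H x e2 = 0 \<longleftrightarrow> hform H x r = 0" if "x \<in> span (fixlat \<sigma>)" for x
    unfolding e1_def e2_def using orthogonal_trace_pair_iff[OF au that r(1)] .
  have gram: "hform H e1 e1 = of_int (2 * \<epsilon> - 4)" "hform H e2 e2 = of_int (- 2 * \<epsilon> - 4)"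
    "hform H e1 e2 = 2 * of_int t" "hform H e2 e1 = 2 * of_int t"
    using trace_pair_gram[OF au herm r] hform_cnj_swap[OF herm, of e1 e2]
    unfolding e1_def[symmetric] e2_def[symmetric] a by (simp_all add: complex_eq_iff)
  from \<epsilon> consider "\<epsilon> = 1" | "\<epsilon> = -1"
    by blast
  then show ?thesis
  proof cases
    case 1
    show ?thesis
      by (rule shear_cuts_out_mirror[OF herm au fixed t]) (use gram orth 1 in auto)
  next
    case 2
    show ?thesis
      by (rule shear_cuts_out_mirror[OF herm au fixed(2,1) t]) (use gram orth 2 in auto)
  qed
qed

lemma proportional_root_cuts_out_mirror:
  assumes herm: "hermitian_mat H" and au: "antiunitary_inv H \<sigma>"
    and r: "r \<in> glat" "hform H r r = -2" and c: "r = c *s \<sigma> r" "c \<in> {1, -1, \<i>, -\<i>}"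
  shows "\<exists>N\<subseteq>fixlat \<sigma>. (zlat_iso H N 1 gram_A1 \<or> zlat_iso H N 1 gram_A1_2) \<and> cuts_out_mirror H \<sigma> r N"
proof -
  have fixed: "\<mu> *s r \<in> fixlat \<sigma>" if "\<mu> \<in> gauss" "\<mu> * c = cnj \<mu>" for \<mu>
  proof -
    have "\<sigma> (\<mu> *s r) = (\<mu> * c) *s \<sigma> r"
      using antiunitary_scale[OF au that(1) r(1)] that(2) by simp
    also have "\<dots> = \<mu> *s r"
      using c(1) by (metis vector_smult_assoc)
    finally show ?thesis
      using glat_scale[OF that(1) r(1)] unfolding fixlat_def by simp
  qed
  have norm: "hform H (\<mu> *s r) (\<mu> *s r) = - 2 * (cnj \<mu> * \<mu>)" for \<mu>
    using r(2) by (simp add: hform_linear)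
  obtain \<mu> G where \<mu>: "\<mu> \<in> gauss" "\<mu> * c = cnj \<mu>" "\<mu> \<noteq> 0"
    and G: "G = gram_A1 \<or> G = gram_A1_2" "- 2 * (cnj \<mu> * \<mu>) = of_int (G 0 0)"
  proof -
    from c(2) consider "c = 1" | "c = -1" | "c = \<i>" | "c = -\<i>"
      by blast
    then show thesis
    proof cases
      case 1
      then show thesis
        using that[of 1 gram_A1] by (simp add: gram_A1_def gauss_def)
    next
      case 2
      then show thesis
        using that[of \<i> gram_A1] by (simp add: gram_A1_def)
    next
      case 3
      then show thesis
        using that[of "1 - \<i>" gram_A1_2] by (simp add: gram_A1_2_def gauss_def complex_eq_iff)
    next
      case 4
      then show thesis
        using that[of "1 + \<i>" gram_A1_2] by (simp add: gram_A1_2_def gauss_def complex_eq_iff)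
    qed
  qed
  moreover have "G 0 0 \<noteq> 0"
    using G(1) by (auto simp: gram_A1_def gram_A1_2_def)
  ultimately have "\<exists>N\<subseteq>fixlat \<sigma>. zlat_iso H N 1 G \<and> cuts_out_mirror H \<sigma> r N"
    using norm by (intro root_multiple_cuts_out_mirror[OF herm au fixed]) auto
  then show ?thesis
    using G(1) by blast
qed

text \<open>A point of the real ball on the mirror of r is orthogonal to r and, being real, also to
  its conjugate.\<close>
lemma conjugate_root_pairing_bound:
  assumes sig: "hyperbolic_sig n H" and au: "antiunitary_inv H \<sigma>"
    and r: "r \<in> glat" "hform H r r = -2" and meets: "rball_B H \<sigma> \<inter> mirror_H H r \<noteq> {}"
  shows "(cmod (hform H r (\<sigma> r)))\<^sup>2 \<le> 4"
    and "(cmod (hform H r (\<sigma> r)))\<^sup>2 = 4 \<Longrightarrow> r = (- cnj (hform H r (\<sigma> r)) / 2) *s \<sigma> r"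
proof -
  have "hermitian_mat H"
    using sig by (simp add: hyperbolic_sig_def)
  then obtain x where x: "x \<in> span (fixlat \<sigma>)" "Re (hform H x x) > 0" "hform H x r = 0"
    using meets by (rule real_ball_mirror_witness)
  have "hform H x (\<sigma> r) = 0"
    using hform_span_fixlat_antiunitary[OF au x(1) r(1)] x(3) by simp
  moreover have "hform H (\<sigma> r) (\<sigma> r) = -2"
    using antiunitary_hform[OF au r(1) r(1)] r(2) by simp
  ultimately show "(cmod (hform H r (\<sigma> r)))\<^sup>2 \<le> 4"
    and "(cmod (hform H r (\<sigma> r)))\<^sup>2 = 4 \<Longrightarrow> r = (- cnj (hform H r (\<sigma> r)) / 2) *s \<sigma> r"
    using root_pairing_bound[OF sig x(2,3) _ r(2)] by blast+
qed

theorem lemma4p11: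
  fixes n :: nat and H :: "complex ^ 'm ^ 'm"
    and \<chi>' :: "complex ^ 'm \<Rightarrow> complex ^ 'm" and r :: "complex ^ 'm"
  assumes "n \<ge> 2"
    and "hyperbolic_sig n H"
    and "\<forall>x\<in>glat. \<forall>y\<in>glat. \<exists>g\<in>gauss. hform H x y = (1 + \<i>) * g"
    and "antiunitary_inv H \<chi>'"
    and "r \<in> glat" and "hform H r r = -2"
    and "rball_B H \<chi>' \<inter> mirror_H H r \<noteq> {}"
  shows "\<exists>N. N \<subseteq> fixlat \<chi>' \<and>
           (zlat_iso H N 1 gram_A1 \<or> zlat_iso H N 1 gram_A1_2 \<or>
            zlat_iso H N 2 gram_A1_A1_2 \<or> zlat_iso H N 2 gram_A1_2_sq) \<and>
           rball_B H \<chi>' \<inter> mirror_H H r =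
             {p \<in> rball_B H \<chi>'. \<exists>x \<in> span (fixlat \<chi>'). p = pclass x \<and>
                 (\<forall>y\<in>N. hform H x y = 0)}"
proof -
  have herm: "hermitian_mat H"
    using assms(2) by (simp add: hyperbolic_sig_def)
  define a where "a = hform H r (\<chi>' r)"
  obtain g where g: "g \<in> gauss" "a = (1 + \<i>) * g"
    using assms(3,5) antiunitary_glat[OF assms(4,5)] unfolding a_def by blast
  note bound = conjugate_root_pairing_bound[OF assms(2,4-7), folded a_def]
  have "\<exists>N\<subseteq>fixlat \<chi>'. (zlat_iso H N 1 gram_A1 \<or> zlat_iso H N 1 gram_A1_2 \<or>
      zlat_iso H N 2 gram_A1_A1_2 \<or> zlat_iso H N 2 gram_A1_2_sq) \<and> cuts_out_mirror H \<chi>' r N"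
  proof (rule small_gauss_multiple_cases[OF g bound(1)])
    assume "a = 0"
    then show ?thesis
      using trace_pair_cuts_out_mirror_A1_2_sq[OF herm assms(4-6)] unfolding a_def by blast
  next
    fix \<epsilon> t :: int
    assume "\<epsilon> \<in> {-1, 1}" "t \<in> {-1, 1}" "a = of_int \<epsilon> + \<i> * of_int t"
    then show ?thesis
      using trace_pair_cuts_out_mirror_A1_A1_2[OF herm assms(4-6)] unfolding a_def by blast
  next
    assume "a \<in> {2, -2, 2 * \<i>, -2 * \<i>}"
    then have "r = (- cnj a / 2) *s \<chi>' r" "- cnj a / 2 \<in> {1, -1, \<i>, -\<i>}"
      using bound(2) by (auto simp: norm_mult)
    then show ?thesis
      using proportional_root_cuts_out_mirror[OF herm assms(4-6)] by blast
  qed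
  then show ?thesis
    unfolding cuts_out_mirror_def by blast
qed

end
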